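(* Let $G=(V_1,V_2,E)$ be a biregular graph. Then $\mathcal{A}(G)\cong\mathcal{A}_{RW}(G)$.
   Context: Graphs are simple (no loops or multiple edges), connected, with countable (finite or infinite) vertex set $V$, and locally finite ($\deg(i)<\infty$ for all $i$, where $\deg(i)$ is the number of neighbors of $i$). The adjacency matrix is $A=(a_{ij})$ with $a_{ij}=1$ if $i,j$ are neighbors and $0$ otherwise. A graph is biregular if it is bipartite with bipartition $V=V_1\sqcup V_2$ (every edge joins $V_1$ to $V_2$) such that all vertices of $V_1$ have a common degree $d_1$ and all vertices of $V_2$ have a common degree $d_2$. An evolution algebra over $\mathbb{R}$ is an algebra with a countable basis $\{e_i\}$ (natural basis) such that $e_i\cdot e_j=0$ for $i\ne j$ and $e_i\cdot e_i=\sum_k c_{ik}e_k$. $\mathcal{A}(G)$ has natural basis $\{e_i:i\in V\}$ with $e_i\cdot e_i=\sum_{k\in V}a_{ik}e_k$; $\mathcal{A}_{RW}(G)$ has natural basis $\{e_i:i\in V\}$ with $e_i\cdot e_i=\sum_{k\in V}\frac{a_{ik}}{\deg(i)}e_k$; in both, $e_i\cdot e_j=0$ for $i\ne j$. $\cong$ denotes algebra isomorphism. *)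

theory Defs
  imports Complex_Main "HOL-Library.Countable_Set"
begin

definition graph :: "'v set \<Rightarrow> ('v \<Rightarrow> 'v \<Rightarrow> bool) \<Rightarrow> bool" where
  "graph V E \<longleftrightarrow> countable V
     \<and> (\<forall>i j. E i j \<longrightarrow> i \<in> V \<and> j \<in> V)
     \<and> (\<forall>i j. E i j \<longrightarrow> E j i)
     \<and> (\<forall>i. \<not> E i i)
     \<and> (\<forall>i\<in>V. \<forall>j\<in>V. (i, j) \<in> {(a, b). E a b}\<^sup>*)
     \<and> (\<forall>i\<in>V. finite {j. E i j})"

definition deg :: "('v \<Rightarrow> 'v \<Rightarrow> bool) \<Rightarrow> 'v \<Rightarrow> nat" where
  "deg E i = card {j. E i j}"

definition biregular :: "'v set \<Rightarrow> ('v \<Rightarrow> 'v \<Rightarrow> bool) \<Rightarrow> bool" where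
  "biregular V E \<longleftrightarrow> (\<exists>V1 V2 d1 d2. V1 \<inter> V2 = {} \<and> V1 \<union> V2 = V
     \<and> (\<forall>i j. E i j \<longrightarrow> (i \<in> V1 \<and> j \<in> V2) \<or> (i \<in> V2 \<and> j \<in> V1))
     \<and> (\<forall>i\<in>V1. deg E i = d1) \<and> (\<forall>i\<in>V2. deg E i = d2))"

text \<open>Evolution algebra with natural basis indexed by V and structure constants c:
  elements are finitely supported real functions on V (coordinates w.r.t. the natural basis),
  e_i e_i = sum_k c i k e_k, e_i e_j = 0 for i \<noteq> j, extended bilinearly.\<close>

definition evo_carrier :: "'v set \<Rightarrow> ('v \<Rightarrow> real) set" where
  "evo_carrier V = {x. (\<forall>i. i \<notin> V \<longrightarrow> x i = 0) \<and> finite {i. x i \<noteq> 0}}"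

definition evo_mult :: "('v \<Rightarrow> 'v \<Rightarrow> real) \<Rightarrow> ('v \<Rightarrow> real) \<Rightarrow> ('v \<Rightarrow> real) \<Rightarrow> ('v \<Rightarrow> real)" where
  "evo_mult c x y = (\<lambda>k. \<Sum>i\<in>{i. x i \<noteq> 0 \<and> y i \<noteq> 0}. x i * y i * c i k)"

definition evo_iso :: "'v set \<Rightarrow> ('v \<Rightarrow> 'v \<Rightarrow> real) \<Rightarrow> ('v \<Rightarrow> 'v \<Rightarrow> real) \<Rightarrow> bool" where
  "evo_iso V c d \<longleftrightarrow> (\<exists>f. bij_betw f (evo_carrier V) (evo_carrier V)
     \<and> (\<forall>x\<in>evo_carrier V. \<forall>y\<in>evo_carrier V. f (\<lambda>k. x k + y k) = (\<lambda>k. f x k + f y k))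
     \<and> (\<forall>a::real. \<forall>x\<in>evo_carrier V. f (\<lambda>k. a * x k) = (\<lambda>k. a * f x k))
     \<and> (\<forall>x\<in>evo_carrier V. \<forall>y\<in>evo_carrier V. f (evo_mult c x y) = evo_mult d (f x) (f y)))"

definition adj_const :: "('v \<Rightarrow> 'v \<Rightarrow> bool) \<Rightarrow> 'v \<Rightarrow> 'v \<Rightarrow> real" where
  "adj_const E i k = (if E i k then 1 else 0)"

definition rw_const :: "('v \<Rightarrow> 'v \<Rightarrow> bool) \<Rightarrow> 'v \<Rightarrow> 'v \<Rightarrow> real" where
  "rw_const E i k = (if E i k then 1 / real (deg E i) else 0)"

end

theory Submission
  imports Defs
begin

text \<open>Rescaling the natural basis, \<open>e\<^sub>k \<mapsto> \<alpha>\<^sub>k e\<^sub>k\<close>, turns structure constants \<open>c\<close> into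
  \<open>d i k = \<alpha>\<^sub>k c i k / \<alpha>\<^sub>i\<^sup>2\<close>. For a biregular graph the constants of the random-walk algebra
  are those of the adjacency algebra divided by \<open>d\<^sub>1\<close> on rows in \<open>V\<^sub>1\<close> and by \<open>d\<^sub>2\<close> on rows
  in \<open>V\<^sub>2\<close>; taking \<open>\<alpha>\<close> constant equal to \<open>a\<close> on \<open>V\<^sub>1\<close> and to \<open>b\<close> on \<open>V\<^sub>2\<close>, this
  amounts to \<open>a\<^sup>2 = d\<^sub>1 b\<close> and \<open>b\<^sup>2 = d\<^sub>2 a\<close>, which has the positive solution
  \<open>a = (d\<^sub>1\<^sup>2 d\<^sub>2)\<^bsup>1/3\<^esup>\<close>, \<open>b = a\<^sup>2 / d\<^sub>1\<close>.\<close>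

lemma evo_iso_by_rescaling:
  fixes \<alpha> :: "'v \<Rightarrow> real"
  assumes nonzero: "\<And>k. \<alpha> k \<noteq> 0"
    and rescale: "\<And>i k. \<alpha> k * c i k = (\<alpha> i)\<^sup>2 * d i k"
  shows "evo_iso V c d"
proof -
  define f where "f = (\<lambda>x :: 'v \<Rightarrow> real. \<lambda>k. \<alpha> k * x k)"
  define g where "g = (\<lambda>x :: 'v \<Rightarrow> real. \<lambda>k. x k / \<alpha> k)"
  have support_f: "{i. f x i \<noteq> 0} = {i. x i \<noteq> 0}" for x
    using nonzero by (simp add: f_def)
  have support_g: "{i. g x i \<noteq> 0} = {i. x i \<noteq> 0}" for x
    using nonzero by (simp add: g_def)
  have "f x \<in> evo_carrier V" if "x \<in> evo_carrier V" for x
    using that support_f by (simp add: evo_carrier_def f_def)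
  moreover have "g x \<in> evo_carrier V" if "x \<in> evo_carrier V" for x
    using that support_g by (simp add: evo_carrier_def g_def)
  moreover have "f (g x) = x" and "g (f x) = x" for x
    using nonzero by (simp_all add: f_def g_def)
  ultimately have "bij_betw f (evo_carrier V) (evo_carrier V)"
    by (intro bij_betw_byWitness[where f' = g]) auto
  moreover have "f (evo_mult c x y) = evo_mult d (f x) (f y)" for x y
  proof
    fix k
    have "f (evo_mult c x y) k = (\<Sum>i | x i \<noteq> 0 \<and> y i \<noteq> 0. x i * y i * (\<alpha> k * c i k))"
      by (simp add: f_def evo_mult_def sum_distrib_left mult_ac)
    also have "\<dots> = (\<Sum>i | x i \<noteq> 0 \<and> y i \<noteq> 0. x i * y i * ((\<alpha> i)\<^sup>2 * d i k))"
      by (simp add: rescale)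
    also have "\<dots> = evo_mult d (f x) (f y) k"
      using nonzero by (simp add: evo_mult_def f_def power2_eq_square mult_ac)
    finally show "f (evo_mult c x y) k = evo_mult d (f x) (f y) k" .
  qed
  ultimately show ?thesis
    unfolding evo_iso_def by (intro exI[where x = f]) (auto simp: f_def algebra_simps)
qed

lemma positive_solution_squares_cross:
  fixes p q :: real
  assumes "p > 0" and "q > 0"
  obtains a b where "a > 0" "b > 0" "a\<^sup>2 = p * b" "b\<^sup>2 = q * a"
proof
  define a where "a = root 3 (p\<^sup>2 * q)"
  show a_pos: "a > 0" using assms by (simp add: a_def)
  have a_cube: "a ^ 3 = p\<^sup>2 * q" using assms by (simp add: a_def)
  show "a\<^sup>2 / p > 0" using a_pos assms by simp
  show "a\<^sup>2 = p * (a\<^sup>2 / p)" using assms by simp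
  have "(a\<^sup>2 / p)\<^sup>2 * p\<^sup>2 = a * a ^ 3"
    using assms by (simp add: power_divide field_simps eval_nat_numeral)
  also have "\<dots> = (q * a) * p\<^sup>2" by (simp add: a_cube)
  finally show "(a\<^sup>2 / p)\<^sup>2 = q * a" using assms by simp
qed

lemma deg_pos_if_edge:
  assumes "graph V E" and "E i k"
  shows "deg E i > 0"
proof -
  have "finite {j. E i j}" using assms unfolding graph_def by blast
  moreover have "k \<in> {j. E i j}" using assms(2) by simp
  ultimately show ?thesis unfolding deg_def by (auto simp: card_gt_0_iff)
qed

lemma biregular_adj_const_rescales_to_rw_const:
  assumes "graph V E" and "biregular V E"
  obtains \<alpha> :: "'v \<Rightarrow> real"
  where "\<And>k. \<alpha> k \<noteq> 0" "\<And>i k. \<alpha> k * adj_const E i k = (\<alpha> i)\<^sup>2 * rw_const E i k"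
proof -
  obtain V1 V2 d1 d2 where disjoint: "V1 \<inter> V2 = {}"
    and bipartite: "\<And>i j. E i j \<Longrightarrow> (i \<in> V1 \<and> j \<in> V2) \<or> (i \<in> V2 \<and> j \<in> V1)"
    and deg1: "\<And>i. i \<in> V1 \<Longrightarrow> deg E i = d1" and deg2: "\<And>i. i \<in> V2 \<Longrightarrow> deg E i = d2"
    using assms(2) unfolding biregular_def by metis
  \<comment> \<open>A side without edges has degree 0; only the degrees along edges matter.\<close>
  obtain a b :: real where "a > 0" "b > 0"
    and a_sq: "a\<^sup>2 = real (max d1 1) * b" and b_sq: "b\<^sup>2 = real (max d2 1) * a"
    by (rule positive_solution_squares_cross[of "real (max d1 1)" "real (max d2 1)"]) auto
  define \<alpha> where "\<alpha> k = (if k \<in> V1 then a else b)" for k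
  show thesis
  proof
    show "\<alpha> k \<noteq> 0" for k using \<open>a > 0\<close> \<open>b > 0\<close> by (simp add: \<alpha>_def)
  next
    fix i k
    show "\<alpha> k * adj_const E i k = (\<alpha> i)\<^sup>2 * rw_const E i k"
    proof (cases "E i k")
      case False
      then show ?thesis by (simp add: adj_const_def rw_const_def)
    next
      case True
      have "deg E i > 0" using deg_pos_if_edge[OF assms(1) True] .
      with bipartite[OF True] disjoint deg1 deg2 consider
          "i \<in> V1" "k \<notin> V1" "deg E i = max d1 1"
        | "i \<notin> V1" "k \<in> V1" "deg E i = max d2 1"
        by fastforce
      then show ?thesis
        using True \<open>a > 0\<close> \<open>b > 0\<close> a_sq b_sq
        by cases (simp_all add: \<alpha>_def adj_const_def rw_const_def)
    qed
  qed
qed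

theorem proposition2p10:
  fixes V :: "'v set" and E :: "'v \<Rightarrow> 'v \<Rightarrow> bool"
  assumes "graph V E" and "biregular V E"
  shows "evo_iso V (adj_const E) (rw_const E)"
proof -
  obtain \<alpha> :: "'v \<Rightarrow> real" where "\<And>k. \<alpha> k \<noteq> 0"
    and "\<And>i k. \<alpha> k * adj_const E i k = (\<alpha> i)\<^sup>2 * rw_const E i k"
    using biregular_adj_const_rescales_to_rw_const[OF assms] by blast
  then show ?thesis by (rule evo_iso_by_rescaling)
qed

end
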